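(* Let $C^*\ge10^6$ be the fixed constant of the context and let $\mathbf{A}\in[-1,1]^{m\times n}$ with $n\ge C^*\cdot m$. With probability at least $0.99$ over its random bits $\mathbf{r}$, the procedure $\textsc{ColumnReductionSampling}$ described in the context does not return $\bot$ and returns $\mathbf{x}_T\in[-1,1]^n$ with $|\{i\in[n]:|\mathbf{x}_T(i)|=1\}|=0.9n$ and $\|\mathbf{A}\mathbf{x}_T\|_\infty=0$. Moreover, for different random seeds $\mathbf{r}\neq\mathbf{r}'$, the outputs $\mathbf{x}_T$ and $\mathbf{x}'_T$ of the procedure on $\mathbf{r}$ and $\mathbf{r}'$ differ on some entry $i$ at which both lie in $\{\pm1\}$.
   Context: Leverage scores: for a linear subspace $H\subseteq\mathbb{R}^S$ and $i\in S$, $\tau_i(H)=\max_{\mathbf{u}\in H\setminus\{0\}}\mathbf{u}(i)^2/\|\mathbf{u}\|_2^2$. If $\psi_1,\dots,\psi_d$ is an orthonormal basis of $H$, then $\tau_i(H)=\sum_j\psi_j(i)^2$ and $\textsc{FindVector}(H,i)$ returns $\mathbf{u}=(\sum_j\psi_j(i)\psi_j)/(\sum_j\psi_j(i)^2)$, the vector of $H$ with $\mathbf{u}(i)=1$ and $\|\mathbf{u}\|_2^2=1/\tau_i(H)$. For $\mathbf{v}\in\mathbb{R}^n$ and $S\subseteq[n]$, $\mathbf{v}(S)$ is its restriction to $S$; vectors in $\mathbb{R}^S$ are extended by zero to $\mathbb{R}^n$. Procedure $\textsc{ColumnReductionSampling}$ with parameters $\eta=0.1$, $T=0.9n$, $\gamma=0.0001$,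 $\delta=0.05$: set $\mathbf{x}_0=\vec 0$. For $t=0,\dots,T-1$: let $\mathcal{F}_t=\{i:|\mathbf{x}_t(i)|=1\}$, $\mathcal{D}_t=\{i:|\mathbf{x}_t(i)|\ge1-\eta\}$; let $H_t$ be the subspace of $\mathbb{R}^{[n]\setminus\mathcal{D}_t}$ orthogonal to $\mathbf{x}_t([n]\setminus\mathcal{D}_t)$ and to every $\mathbf{A}(j,[n]\setminus\mathcal{D}_t)$, $j\in[m]$; find the first coordinate $k_t\notin\mathcal{D}_t$ with $\tau_{k_t}(H_t)\ge1-\gamma$ and $|\mathbf{x}_t(k_t)|\le\delta$ (return $\bot$ if none exists); let $\mathbf{u}_t=\textsc{FindVector}(H_t,k_t)$; with $\delta_t=\mathbf{x}_t(k_t)$, set $\mathbf{r}(t+1)=1$ with probability $\frac{1+\delta_t}{2}$ and $\mathbf{r}(t+1)=-1$ otherwise; choose $\alpha_t\in\mathbb{R}$ so that $\mathbf{x}_{t+1}=\mathbf{x}_t+\alpha_t\mathbf{u}_t$ satisfies $\mathbf{x}_{t+1}(k_t)=\mathbf{r}(t+1)$. Return $\mathbf{x}_T$. The sequence $\mathbf{r}\in\{\pm1\}^T$ is the random seed. *)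

theory Defs
  imports Complex_Main
begin

text \<open>Vectors in R^n are functions nat => real, indices 0..<n; a vector in R^S
  (S a subset of {0..<n}) is represented by its extension by zero.
  The matrix A in R^{m x n} is a function nat => nat => real (row, column).\<close>

definition crs_eta :: real where "crs_eta = 1/10"
definition crs_gamma :: real where "crs_gamma = 1/10000"
definition crs_delta :: real where "crs_delta = 1/20"

definition crs_T :: "nat \<Rightarrow> nat" where "crs_T n = nat \<lfloor>9 * real n / 10\<rfloor>"

definition sqnorm_on :: "nat set \<Rightarrow> (nat \<Rightarrow> real) \<Rightarrow> real" where
  "sqnorm_on S u = (\<Sum>j\<in>S. (u j)^2)"

definition leverage :: "nat set \<Rightarrow> (nat \<Rightarrow> real) set \<Rightarrow> nat \<Rightarrow> real" where
  "leverage S H i = Sup ({(u i)^2 / sqnorm_on S u | u. u \<in> H \<and> (\<exists>j\<in>S. u j \<noteq> 0)} \<union> {0})"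

definition find_vector :: "nat set \<Rightarrow> (nat \<Rightarrow> real) set \<Rightarrow> nat \<Rightarrow> (nat \<Rightarrow> real)" where
  "find_vector S H i = (THE u. u \<in> H \<and> u i = 1 \<and> sqnorm_on S u = 1 / leverage S H i)"

definition crs_D :: "nat \<Rightarrow> (nat \<Rightarrow> real) \<Rightarrow> nat set" where
  "crs_D n x = {i. i < n \<and> \<bar>x i\<bar> \<ge> 1 - crs_eta}"

definition crs_S :: "nat \<Rightarrow> (nat \<Rightarrow> real) \<Rightarrow> nat set" where
  "crs_S n x = {0..<n} - crs_D n x"

definition crs_H :: "(nat \<Rightarrow> nat \<Rightarrow> real) \<Rightarrow> nat \<Rightarrow> nat \<Rightarrow> (nat \<Rightarrow> real) \<Rightarrow> (nat \<Rightarrow> real) set" where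
  "crs_H A m n x = {u. (\<forall>j. j \<notin> crs_S n x \<longrightarrow> u j = 0)
      \<and> (\<Sum>j\<in>crs_S n x. u j * x j) = 0
      \<and> (\<forall>r<m. (\<Sum>j\<in>crs_S n x. A r j * u j) = 0)}"

definition crs_cand :: "(nat \<Rightarrow> nat \<Rightarrow> real) \<Rightarrow> nat \<Rightarrow> nat \<Rightarrow> (nat \<Rightarrow> real) \<Rightarrow> nat set" where
  "crs_cand A m n x = {k. k \<in> crs_S n x
      \<and> leverage (crs_S n x) (crs_H A m n x) k \<ge> 1 - crs_gamma
      \<and> \<bar>x k\<bar> \<le> crs_delta}"

text \<open>One iteration with random bit b = r(t+1); None stands for returning bottom.\<close>
definition crs_step :: "(nat \<Rightarrow> nat \<Rightarrow> real) \<Rightarrow> nat \<Rightarrow> nat \<Rightarrow> (nat \<Rightarrow> real) \<Rightarrow> real \<Rightarrow> (nat \<Rightarrow> real) option" where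
  "crs_step A m n x b =
     (if crs_cand A m n x = {} then None
      else let k = Min (crs_cand A m n x);
               u = find_vector (crs_S n x) (crs_H A m n x) k;
               \<alpha> = (b - x k) / u k
           in Some (\<lambda>i. x i + \<alpha> * u i))"

definition crs_run :: "(nat \<Rightarrow> nat \<Rightarrow> real) \<Rightarrow> nat \<Rightarrow> nat \<Rightarrow> real list \<Rightarrow> (nat \<Rightarrow> real) option" where
  "crs_run A m n rs = foldl (\<lambda>xo b. case xo of None \<Rightarrow> None | Some x \<Rightarrow> crs_step A m n x b)
                            (Some (\<lambda>_. 0)) rs"

text \<open>ColumnReductionSampling on seed r in {+-1}^T (rs ! t = r(t+1)).\<close>
definition ColumnReductionSampling :: "(nat \<Rightarrow> nat \<Rightarrow> real) \<Rightarrow> nat \<Rightarrow> nat \<Rightarrow> real list \<Rightarrow> (nat \<Rightarrow> real) option" where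
  "ColumnReductionSampling A m n rs = crs_run A m n rs"

definition crs_seeds :: "nat \<Rightarrow> real list set" where
  "crs_seeds n = {rs. length rs = crs_T n \<and> set rs \<subseteq> {-1, 1}}"

text \<open>Probability that bit b is drawn in the state xo: (1 + b * delta_t)/2, where
  delta_t = x_t(k_t); after the procedure has returned bottom the remaining bits
  are irrelevant and are taken to be uniform.\<close>
definition crs_bitprob :: "(nat \<Rightarrow> nat \<Rightarrow> real) \<Rightarrow> nat \<Rightarrow> nat \<Rightarrow> (nat \<Rightarrow> real) option \<Rightarrow> real \<Rightarrow> real" where
  "crs_bitprob A m n xo b = (case xo of None \<Rightarrow> 1/2
     | Some x \<Rightarrow> if crs_cand A m n x = {} then 1/2
                 else (1 + b * x (Min (crs_cand A m n x))) / 2)"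

definition crs_seed_prob :: "(nat \<Rightarrow> nat \<Rightarrow> real) \<Rightarrow> nat \<Rightarrow> nat \<Rightarrow> real list \<Rightarrow> real" where
  "crs_seed_prob A m n rs = (\<Prod>t<length rs. crs_bitprob A m n (crs_run A m n (take t rs)) (rs ! t))"

definition crs_good :: "(nat \<Rightarrow> nat \<Rightarrow> real) \<Rightarrow> nat \<Rightarrow> nat \<Rightarrow> real list \<Rightarrow> bool" where
  "crs_good A m n rs = (\<exists>x. ColumnReductionSampling A m n rs = Some x
      \<and> (\<forall>i<n. \<bar>x i\<bar> \<le> 1)
      \<and> card {i. i < n \<and> \<bar>x i\<bar> = 1} = crs_T n
      \<and> (\<forall>r<m. (\<Sum>j<n. A r j * x j) = 0))"

definition crs_success_prob :: "(nat \<Rightarrow> nat \<Rightarrow> real) \<Rightarrow> nat \<Rightarrow> nat \<Rightarrow> real" where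
  "crs_success_prob A m n = (\<Sum>rs\<in>crs_seeds n. if crs_good A m n rs then crs_seed_prob A m n rs else 0)"

end

theory Submission
  imports Defs "HOL-Library.Indicator_Function" "HOL-Library.Sublist" "HOL-Analysis.Convex"
begin

text \<open>
  Each round fixes one more coordinate to \<open>\<plusminus>1\<close> and keeps \<open>A x = 0\<close>, because \<open>u\<^sub>t\<close> lies in
  \<open>H\<^sub>t\<close>; since \<open>\<tau>\<^sub>k(H\<^sub>t) \<ge> 1 - \<gamma>\<close>, the step moves every other live coordinate by at most
  about \<open>1/99\<close>, so nothing overshoots.  The leverage scores of \<open>H\<^sub>t\<close> are one minus those of
  the span \<open>W\<close> of the at most \<open>m + 1\<close> constraints, and the latter add up to \<open>dim W\<close>.
  Hence only \<open>O(m)\<close> coordinates have small leverage in \<open>H\<^sub>t\<close>, and a pivot exists unless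
  many coordinates are partially fixed, that is, unless \<open>\<parallel>x\<^sub>t\<parallel>\<^sup>2 - t\<close> is of order \<open>n\<close>.

  The random sign makes \<open>E[(r - \<delta>\<^sub>t)\<^sup>2] = 1 - \<delta>\<^sub>t\<^sup>2\<close>, and \<open>1/\<tau> \<le> 1 + 1/9999\<close>, so
  \<open>exp((\<parallel>x\<^sub>t\<parallel>\<^sup>2 - 1.00011 t - n/10\<^sup>4)/10)\<close> is a supermartingale.  It starts at
  \<open>exp(-n/10\<^sup>5) \<le> 1/100\<close> and is at least \<open>1\<close> whenever the procedure fails, so failure has
  probability at most \<open>1/100\<close>.  Without constraints the iterates stay in \<open>{-1,0,1}\<^sup>n\<close> and
  the procedure never fails.

  Two distinct seeds first differ in some round \<open>t\<close>; both runs share \<open>x\<^sub>t\<close> and \<open>k\<^sub>t\<close>, set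
  \<open>x(k\<^sub>t)\<close> to opposite signs, and coordinates equal to \<open>\<plusminus>1\<close> never move again.
\<close>

section \<open>Leverage scores of orthogonal complements\<close>

definition inner_on :: "nat set \<Rightarrow> (nat \<Rightarrow> real) \<Rightarrow> (nat \<Rightarrow> real) \<Rightarrow> real" where
  "inner_on S u v = (\<Sum>j\<in>S. u j * v j)"

definition vectors_on :: "nat set \<Rightarrow> (nat \<Rightarrow> real) set" where
  "vectors_on S = {u. \<forall>j. j \<notin> S \<longrightarrow> u j = 0}"

definition orthonormal_on :: "nat set \<Rightarrow> (nat \<Rightarrow> real) list \<Rightarrow> bool" where
  "orthonormal_on S ws \<longleftrightarrow> set ws \<subseteq> vectors_on S \<and>
     (\<forall>i<length ws. \<forall>j<length ws. inner_on S (ws ! i) (ws ! j) = (if i = j then 1 else 0))"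

definition perp_on :: "nat set \<Rightarrow> (nat \<Rightarrow> real) list \<Rightarrow> (nat \<Rightarrow> real) set" where
  "perp_on S ws = {u \<in> vectors_on S. \<forall>w\<in>set ws. inner_on S u w = 0}"

definition span_leverage :: "(nat \<Rightarrow> real) list \<Rightarrow> nat \<Rightarrow> real" where
  "span_leverage ws k = (\<Sum>i<length ws. ((ws ! i) k)^2)"

definition residual :: "nat set \<Rightarrow> (nat \<Rightarrow> real) list \<Rightarrow> (nat \<Rightarrow> real) \<Rightarrow> nat \<Rightarrow> real" where
  "residual S ws a j = (if j \<in> S then a j - (\<Sum>i<length ws. inner_on S a (ws ! i) * (ws ! i) j) else 0)"

lemma inner_on_commute: "inner_on S u v = inner_on S v u"
  by (simp add: inner_on_def mult.commute)

lemma inner_on_scale_right: "inner_on S u (\<lambda>j. c * v j) = c * inner_on S u v"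
  by (simp add: inner_on_def sum_distrib_left mult_ac)

lemma inner_on_scale_left: "inner_on S (\<lambda>j. c * u j) v = c * inner_on S u v"
  by (simp add: inner_on_def sum_distrib_left mult_ac)

lemma inner_on_diff_self:
  "inner_on S (\<lambda>j. u j - v j) (\<lambda>j. u j - v j) = inner_on S u u - 2 * inner_on S u v + inner_on S v v"
proof -
  have "inner_on S (\<lambda>j. u j - v j) (\<lambda>j. u j - v j) = (\<Sum>j\<in>S. u j * u j - 2 * (u j * v j) + v j * v j)"
    unfolding inner_on_def by (intro sum.cong) (auto simp: algebra_simps)
  then show ?thesis
    by (simp add: inner_on_def sum.distrib sum_subtractf sum_distrib_left)
qed

lemma sqnorm_on_eq_inner_on: "sqnorm_on S u = inner_on S u u"
  by (simp add: sqnorm_on_def inner_on_def power2_eq_square)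

lemma inner_on_self_nonneg: "0 \<le> inner_on S u u"
  by (simp add: inner_on_def sum_nonneg)

lemma inner_on_self_pos:
  assumes "finite S" "j \<in> S" "u j \<noteq> 0"
  shows "0 < inner_on S u u"
  unfolding inner_on_def using assms
  by (intro sum_pos2[of S j]) (auto simp: zero_less_mult_iff linorder_neq_iff)

lemma vectors_on_eqI:
  assumes "finite S" "u \<in> vectors_on S" "v \<in> vectors_on S"
    and "inner_on S (\<lambda>j. u j - v j) (\<lambda>j. u j - v j) = 0"
  shows "u = v"
proof
  fix j
  show "u j = v j"
  proof (cases "j \<in> S")
    case True
    then show ?thesis
      using inner_on_self_pos[OF assms(1) True, of "\<lambda>j. u j - v j"] assms(4)
      by (cases "u j = v j") auto
  qed (use assms(2,3) in \<open>simp add: vectors_on_def\<close>)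
qed

lemma inner_on_indicator:
  assumes "finite S" "k \<in> S"
  shows "inner_on S u (indicator {k}) = u k"
  using assms by (simp add: inner_on_def indicator_def if_distrib sum.delta cong: if_cong)

lemma inner_on_orthonormal_sum:
  assumes "orthonormal_on S ws" "l < length ws"
  shows "(\<Sum>i<length ws. c i * inner_on S (ws ! l) (ws ! i)) = c l"
proof -
  have "(\<Sum>i<length ws. c i * inner_on S (ws ! l) (ws ! i)) = (\<Sum>i<length ws. if i = l then c l else 0)"
    using assms by (intro sum.cong) (auto simp: orthonormal_on_def)
  then show ?thesis using assms(2) by simp
qed

lemma inner_on_residual:
  "inner_on S u (residual S ws a)
     = inner_on S u a - (\<Sum>i<length ws. inner_on S a (ws ! i) * inner_on S u (ws ! i))"
proof -
  have "inner_on S u (residual S ws a)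
      = (\<Sum>j\<in>S. u j * a j - (\<Sum>i<length ws. inner_on S a (ws ! i) * (u j * (ws ! i) j)))"
    unfolding inner_on_def residual_def
    by (intro sum.cong) (auto simp: right_diff_distrib sum_distrib_left mult_ac)
  also have "\<dots> = inner_on S u a - (\<Sum>i<length ws. inner_on S a (ws ! i) * inner_on S u (ws ! i))"
    unfolding sum_subtractf inner_on_def by (subst sum.swap) (simp add: sum_distrib_left)
  finally show ?thesis .
qed

lemma residual_in_perp_on:
  assumes "orthonormal_on S ws"
  shows "residual S ws a \<in> perp_on S ws"
proof -
  have "inner_on S (residual S ws a) (ws ! l) = 0" if "l < length ws" for l
    using inner_on_residual[of S "ws ! l" ws a] inner_on_orthonormal_sum[OF assms that]
    by (simp add: inner_on_commute)
  then show ?thesis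
    by (auto simp: perp_on_def vectors_on_def residual_def in_set_conv_nth)
qed

lemma inner_on_residual_perp_on:
  assumes "u \<in> perp_on S ws"
  shows "inner_on S u (residual S ws a) = inner_on S u a"
  using assms by (simp add: inner_on_residual perp_on_def)

lemma perp_on_scale: "u \<in> perp_on S ws \<Longrightarrow> (\<lambda>j. c * u j) \<in> perp_on S ws"
  by (simp add: perp_on_def vectors_on_def inner_on_scale_left)

lemma perp_on_snoc: "perp_on S (ws @ [z]) = {u \<in> perp_on S ws. inner_on S u z = 0}"
  by (auto simp: perp_on_def)

lemma orthonormal_on_Nil: "orthonormal_on S []"
  by (simp add: orthonormal_on_def)

lemma orthonormal_on_snoc:
  assumes "orthonormal_on S ws" "z \<in> vectors_on S" "inner_on S z z = 1"
    and "\<forall>w\<in>set ws. inner_on S z w = 0"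
  shows "orthonormal_on S (ws @ [z])"
  unfolding orthonormal_on_def
proof (intro conjI allI impI)
  show "set (ws @ [z]) \<subseteq> vectors_on S" using assms(1,2) by (simp add: orthonormal_on_def)
  have z: "inner_on S z (ws ! i) = 0" "inner_on S (ws ! i) z = 0" if "i < length ws" for i
    using assms(4) that by (simp_all add: inner_on_commute[of S _ z])
  fix i j assume "i < length (ws @ [z])" "j < length (ws @ [z])"
  then consider "i < length ws" "j < length ws" | "i < length ws" "j = length ws"
    | "i = length ws" "j < length ws" | "i = length ws" "j = length ws"
    by fastforce
  then show "inner_on S ((ws @ [z]) ! i) ((ws @ [z]) ! j) = (if i = j then 1 else 0)"
    by cases (use assms(1,3) z in \<open>simp_all add: nth_append orthonormal_on_def\<close>)
qed

lemma gram_schmidt_step: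
  assumes "finite S" "orthonormal_on S ws"
  obtains ws' where "orthonormal_on S ws'" "length ws' \<le> Suc (length ws)"
    "perp_on S ws' = {u \<in> perp_on S ws. inner_on S u a = 0}"
proof (cases "\<forall>j\<in>S. residual S ws a j = 0")
  case True
  then have "inner_on S u a = 0" if "u \<in> perp_on S ws" for u
    using inner_on_residual_perp_on[OF that, of a] by (simp add: inner_on_def)
  then have "perp_on S ws = {u \<in> perp_on S ws. inner_on S u a = 0}" by blast
  with that[of ws] assms(2) show ?thesis by simp
next
  case False
  let ?r = "residual S ws a"
  define c where "c = 1 / sqrt (inner_on S ?r ?r)"
  define z where "z = (\<lambda>j. c * ?r j)"
  have pos: "0 < inner_on S ?r ?r"
    using False inner_on_self_pos[OF assms(1)] by blast
  have r: "?r \<in> perp_on S ws" by (rule residual_in_perp_on[OF assms(2)])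
  have "inner_on S z z = c * (c * inner_on S ?r ?r)"
    unfolding z_def inner_on_scale_left inner_on_scale_right ..
  also have "\<dots> = 1"
    using pos by (simp add: c_def)
  finally have "inner_on S z z = 1" .
  moreover have "z \<in> vectors_on S" "\<forall>w\<in>set ws. inner_on S z w = 0"
    using perp_on_scale[OF r, of c] by (simp_all add: z_def perp_on_def)
  moreover have "inner_on S u z = 0 \<longleftrightarrow> inner_on S u a = 0" if "u \<in> perp_on S ws" for u
  proof -
    have "inner_on S u z = c * inner_on S u ?r"
      unfolding z_def inner_on_scale_right ..
    then show ?thesis
      using pos inner_on_residual_perp_on[OF that, of a] by (simp add: c_def)
  qed
  ultimately have "orthonormal_on S (ws @ [z])"
    "perp_on S (ws @ [z]) = {u \<in> perp_on S ws. inner_on S u a = 0}"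
    using orthonormal_on_snoc[OF assms(2)] by (auto simp: perp_on_snoc)
  with that[of "ws @ [z]"] show ?thesis by simp
qed

lemma gram_schmidt:
  assumes "finite S"
  obtains ws where "orthonormal_on S ws" "length ws \<le> length vs"
    "perp_on S ws = {u \<in> vectors_on S. \<forall>v\<in>set vs. inner_on S u v = 0}"
proof (induction vs arbitrary: thesis)
  case Nil
  show ?case by (rule Nil[of "[]"]) (auto simp: orthonormal_on_def perp_on_def)
next
  case (Cons a vs)
  obtain ws where "orthonormal_on S ws" "length ws \<le> length vs"
    "perp_on S ws = {u \<in> vectors_on S. \<forall>v\<in>set vs. inner_on S u v = 0}"
    using Cons.IH by blast
  moreover obtain ws' where "orthonormal_on S ws'" "length ws' \<le> Suc (length ws)"
    "perp_on S ws' = {u \<in> perp_on S ws. inner_on S u a = 0}"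
    using gram_schmidt_step[OF assms \<open>orthonormal_on S ws\<close>] by blast
  ultimately show ?case
    using Cons.prems[of ws'] by auto
qed

lemma span_leverage_nonneg: "0 \<le> span_leverage ws k"
  by (simp add: span_leverage_def sum_nonneg)

lemma sum_span_leverage:
  assumes "orthonormal_on S ws"
  shows "(\<Sum>k\<in>S. span_leverage ws k) = real (length ws)"
proof -
  have "(\<Sum>k\<in>S. span_leverage ws k) = (\<Sum>i<length ws. inner_on S (ws ! i) (ws ! i))"
    unfolding span_leverage_def inner_on_def by (subst sum.swap) (simp add: power2_eq_square)
  also have "\<dots> = (\<Sum>i<length ws. 1)"
    using assms by (intro sum.cong) (auto simp: orthonormal_on_def)
  finally show ?thesis by simp
qed

context
  fixes S :: "nat set" and ws :: "(nat \<Rightarrow> real) list" and k :: nat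
  assumes S: "finite S" "k \<in> S" and ws: "orthonormal_on S ws"
begin

private abbreviation "r \<equiv> residual S ws (indicator {k})"

private lemma residual_indicator_at: "r k = 1 - span_leverage ws k"
  using S by (simp add: residual_def span_leverage_def inner_on_commute[of S "indicator {k}"]
      inner_on_indicator power2_eq_square)

private lemma inner_on_perp_residual_indicator: "u \<in> perp_on S ws \<Longrightarrow> inner_on S u r = u k"
  using S by (simp add: inner_on_residual_perp_on inner_on_indicator)

private lemma inner_on_residual_indicator_self: "inner_on S r r = 1 - span_leverage ws k"
  using inner_on_perp_residual_indicator[OF residual_in_perp_on[OF ws]] residual_indicator_at
  by simp

lemma span_leverage_le_1: "span_leverage ws k \<le> 1"
  using inner_on_residual_indicator_self inner_on_self_nonneg[of S r] by simp

lemma perp_on_coord_sq_le: "u \<in> perp_on S ws \<Longrightarrow> (u k)^2 \<le> inner_on S u u * (1 - span_leverage ws k)"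
  using Cauchy_Schwarz_ineq_sum[of u r S] inner_on_perp_residual_indicator
    inner_on_residual_indicator_self
  by (simp add: inner_on_def power2_eq_square)

lemma leverage_perp_on: "leverage S (perp_on S ws) k = 1 - span_leverage ws k"
proof -
  let ?X = "{(u k)^2 / sqnorm_on S u | u. u \<in> perp_on S ws \<and> (\<exists>j\<in>S. u j \<noteq> 0)} \<union> {0}"
  have "y \<le> 1 - span_leverage ws k" if "y \<in> ?X" for y
    using that span_leverage_le_1 perp_on_coord_sq_le inner_on_self_pos[OF S(1)]
    by (force simp: sqnorm_on_eq_inner_on divide_le_eq mult.commute)
  moreover have "1 - span_leverage ws k \<in> ?X"
  proof (cases "span_leverage ws k = 1")
    case False
    then have "(r k)^2 / sqnorm_on S r = 1 - span_leverage ws k" "r k \<noteq> 0"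
      using residual_indicator_at inner_on_residual_indicator_self
      by (simp_all add: sqnorm_on_eq_inner_on power2_eq_square)
    then show ?thesis
      using residual_in_perp_on[OF ws] S(2) by (intro UnI1 CollectI exI[of _ r]) auto
  qed simp
  ultimately show ?thesis
    unfolding leverage_def by (intro cSup_eq_maximum) auto
qed

lemma find_vector_perp_on:
  assumes "span_leverage ws k < 1"
  defines "u \<equiv> find_vector S (perp_on S ws) k"
  shows "u \<in> perp_on S ws" "u k = 1" "sqnorm_on S u = 1 / leverage S (perp_on S ws) k"
proof -
  define \<tau> where "\<tau> = 1 - span_leverage ws k"
  have \<tau>: "0 < \<tau>" "leverage S (perp_on S ws) k = \<tau>"
    using assms(1) leverage_perp_on by (simp_all add: \<tau>_def)
  define v where "v = (\<lambda>j. (1 / \<tau>) * r j)"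
  have v: "v \<in> perp_on S ws"
    unfolding v_def by (intro perp_on_scale residual_in_perp_on ws)
  have "v k = 1" using residual_indicator_at \<tau> by (simp add: v_def \<tau>_def)
  have "inner_on S v v = 1 / \<tau>"
    unfolding v_def inner_on_scale_left inner_on_scale_right inner_on_residual_indicator_self
    using \<tau> by (simp add: \<tau>_def)
  have unique: "w = v" if w: "w \<in> perp_on S ws" "w k = 1" "inner_on S w w = 1 / \<tau>" for w
  proof (rule vectors_on_eqI[OF S(1)])
    show "w \<in> vectors_on S" "v \<in> vectors_on S" using w(1) v by (simp_all add: perp_on_def)
    have "inner_on S w v = 1 / \<tau>"
      using inner_on_perp_residual_indicator[OF w(1)] w(2)
      unfolding v_def inner_on_scale_right by simp
    then show "inner_on S (\<lambda>j. w j - v j) (\<lambda>j. w j - v j) = 0"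
      using w(3) \<open>inner_on S v v = 1 / \<tau>\<close> by (simp add: inner_on_diff_self)
  qed
  have "u = v"
    unfolding u_def find_vector_def \<tau>(2) sqnorm_on_eq_inner_on
  proof (rule the_equality)
    show "v \<in> perp_on S ws \<and> v k = 1 \<and> inner_on S v v = 1 / \<tau>"
      using v \<open>v k = 1\<close> \<open>inner_on S v v = 1 / \<tau>\<close> by blast
  qed (use unique in blast)
  then show "u \<in> perp_on S ws" "u k = 1" "sqnorm_on S u = 1 / leverage S (perp_on S ws) k"
    using v \<open>v k = 1\<close> \<open>inner_on S v v = 1 / \<tau>\<close> \<tau>(2)
    by (simp_all add: sqnorm_on_eq_inner_on)
qed

end

section \<open>One round of the procedure\<close>

lemma crs_S_iff: "i \<in> crs_S n x \<longleftrightarrow> i < n \<and> \<bar>x i\<bar> < 9/10"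
  by (auto simp: crs_S_def crs_D_def crs_eta_def)

lemma finite_crs_S: "finite (crs_S n x)"
  by (simp add: crs_S_def)

lemma sum_lessThan_eq_sum_crs_S:
  assumes "\<And>i. i \<notin> crs_S n x \<Longrightarrow> f i = 0"
  shows "(\<Sum>i<n. f i) = (\<Sum>i\<in>crs_S n x. f i)"
  using assms by (intro sum.mono_neutral_right) (auto simp: crs_S_iff)

lemma crs_H_eq_perp_constraints:
  "crs_H A m n x = {u \<in> vectors_on (crs_S n x).
     \<forall>v\<in>set (x # map A [0..<m]). inner_on (crs_S n x) u v = 0}"
  by (auto simp: crs_H_def vectors_on_def inner_on_def mult.commute)

lemma crs_H_basis:
  obtains ws where "orthonormal_on (crs_S n x) ws" "crs_H A m n x = perp_on (crs_S n x) ws"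
    "length ws \<le> Suc m"
proof -
  obtain ws where "orthonormal_on (crs_S n x) ws" "length ws \<le> length (x # map A [0..<m])"
    "perp_on (crs_S n x) ws = {u \<in> vectors_on (crs_S n x).
       \<forall>v\<in>set (x # map A [0..<m]). inner_on (crs_S n x) u v = 0}"
    using gram_schmidt[OF finite_crs_S] by blast
  with that show ?thesis by (simp add: crs_H_eq_perp_constraints)
qed

lemma crs_H_unconstrained:
  assumes "m = 0" "\<forall>j\<in>crs_S n x. x j = 0"
  shows "crs_H A m n x = perp_on (crs_S n x) []"
  using assms by (auto simp: crs_H_eq_perp_constraints perp_on_def inner_on_def)

definition crs_pivot :: "(nat \<Rightarrow> nat \<Rightarrow> real) \<Rightarrow> nat \<Rightarrow> nat \<Rightarrow> (nat \<Rightarrow> real) \<Rightarrow> nat" where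
  "crs_pivot A m n x = Min (crs_cand A m n x)"

definition crs_tau :: "(nat \<Rightarrow> nat \<Rightarrow> real) \<Rightarrow> nat \<Rightarrow> nat \<Rightarrow> (nat \<Rightarrow> real) \<Rightarrow> real" where
  "crs_tau A m n x = leverage (crs_S n x) (crs_H A m n x) (crs_pivot A m n x)"

definition crs_direction :: "(nat \<Rightarrow> nat \<Rightarrow> real) \<Rightarrow> nat \<Rightarrow> nat \<Rightarrow> (nat \<Rightarrow> real) \<Rightarrow> nat \<Rightarrow> real" where
  "crs_direction A m n x = find_vector (crs_S n x) (crs_H A m n x) (crs_pivot A m n x)"

definition crs_update :: "(nat \<Rightarrow> nat \<Rightarrow> real) \<Rightarrow> nat \<Rightarrow> nat \<Rightarrow> (nat \<Rightarrow> real) \<Rightarrow> real \<Rightarrow> nat \<Rightarrow> real" where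
  "crs_update A m n x b i = x i + (b - x (crs_pivot A m n x)) * crs_direction A m n x i"

context
  fixes A :: "nat \<Rightarrow> nat \<Rightarrow> real" and m n :: nat and x :: "nat \<Rightarrow> real"
  assumes cand: "crs_cand A m n x \<noteq> {}"
begin

private abbreviation "S \<equiv> crs_S n x"
private abbreviation "k \<equiv> crs_pivot A m n x"
private abbreviation "u \<equiv> crs_direction A m n x"
private abbreviation "\<tau> \<equiv> crs_tau A m n x"

lemma crs_pivot_cand: "k \<in> S" "\<bar>x k\<bar> \<le> 1/20" "1 - 1/10000 \<le> \<tau>"
proof -
  have "finite (crs_cand A m n x)"
    using finite_crs_S by (rule finite_subset[rotated]) (auto simp: crs_cand_def)
  then have "k \<in> crs_cand A m n x"
    unfolding crs_pivot_def using cand by (rule Min_in)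
  then show "k \<in> S" "\<bar>x k\<bar> \<le> 1/20" "1 - 1/10000 \<le> \<tau>"
    by (auto simp: crs_cand_def crs_delta_def crs_gamma_def crs_tau_def)
qed

lemma crs_direction_spec: "u \<in> crs_H A m n x" "u k = 1" "sqnorm_on S u = 1 / \<tau>" "\<tau> \<le> 1"
proof -
  obtain ws where ws: "orthonormal_on S ws" "crs_H A m n x = perp_on S ws"
    using crs_H_basis by blast
  have \<tau>: "\<tau> = 1 - span_leverage ws k"
    using leverage_perp_on[OF finite_crs_S crs_pivot_cand(1) ws(1)] ws(2) by (simp add: crs_tau_def)
  then show "\<tau> \<le> 1" using span_leverage_nonneg[of ws k] by simp
  have "span_leverage ws k < 1" using \<tau> crs_pivot_cand(3) by simp
  from find_vector_perp_on[OF finite_crs_S crs_pivot_cand(1) ws(1) this] ws(2)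
  show "u \<in> crs_H A m n x" "u k = 1" "sqnorm_on S u = 1 / \<tau>"
    by (simp_all add: crs_direction_def crs_tau_def)
qed

lemma crs_step_eq_update: "crs_step A m n x b = Some (crs_update A m n x b)"
  using cand crs_direction_spec(2)
  by (simp add: crs_step_def crs_update_def crs_direction_def crs_pivot_def Let_def fun_eq_iff)

lemma crs_direction_outside: "i \<notin> S \<Longrightarrow> u i = 0"
  using crs_direction_spec(1) by (simp add: crs_H_def)

lemma crs_direction_sq_le: "i \<in> S \<Longrightarrow> i \<noteq> k \<Longrightarrow> (u i)^2 \<le> 1 / \<tau> - 1"
proof -
  assume "i \<in> S" "i \<noteq> k"
  then have "(\<Sum>j\<in>{i, k}. (u j)^2) \<le> (\<Sum>j\<in>S. (u j)^2)"
    using crs_pivot_cand(1) finite_crs_S by (intro sum_mono2) auto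
  then show ?thesis
    using \<open>i \<noteq> k\<close> crs_direction_spec(2,3) by (simp add: sqnorm_on_def)
qed

lemma crs_direction_small: "i \<in> S \<Longrightarrow> i \<noteq> k \<Longrightarrow> \<bar>u i\<bar> \<le> 1/99"
proof -
  assume "i \<in> S" "i \<noteq> k"
  have "1 / \<tau> \<le> 1 / (1 - 1/10000)"
    using crs_pivot_cand(3) by (intro divide_left_mono) auto
  then have "(u i)^2 \<le> (1/99)^2"
    using crs_direction_sq_le[OF \<open>i \<in> S\<close> \<open>i \<noteq> k\<close>] by (simp add: power2_eq_square)
  then show ?thesis
    using abs_le_square_iff[of "u i" "1/99"] by simp
qed

lemma crs_update_pivot: "crs_update A m n x b k = b"
  using crs_direction_spec(2) by (simp add: crs_update_def)

lemma crs_update_outside: "i \<notin> S \<Longrightarrow> crs_update A m n x b i = x i"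
  using crs_direction_outside by (simp add: crs_update_def)

lemma crs_update_inside:
  assumes "\<bar>b\<bar> \<le> 1" "i \<in> S" "i \<noteq> k"
  shows "\<bar>crs_update A m n x b i\<bar> < 1"
proof -
  have "\<bar>b - x k\<bar> \<le> 21/20" using assms(1) crs_pivot_cand(2) by linarith
  moreover have "\<bar>u i\<bar> \<le> 1/99" using crs_direction_small[OF assms(2,3)] .
  ultimately have "\<bar>(b - x k) * u i\<bar> \<le> 21/20 * (1/99)"
    unfolding abs_mult by (intro mult_mono) auto
  moreover have "\<bar>x i\<bar> < 9/10" using assms(2) by (simp add: crs_S_iff)
  ultimately show ?thesis by (simp add: crs_update_def)
qed

lemma crs_update_constraint:
  assumes "r < m"
  shows "(\<Sum>j<n. A r j * crs_update A m n x b j) = (\<Sum>j<n. A r j * x j)"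
proof -
  have "(\<Sum>j<n. A r j * u j) = (\<Sum>j\<in>S. A r j * u j)"
    using crs_direction_outside by (intro sum_lessThan_eq_sum_crs_S) auto
  also have "\<dots> = 0" using crs_direction_spec(1) assms by (simp add: crs_H_def)
  finally have "(\<Sum>j<n. A r j * u j) = 0" .
  moreover have "(\<Sum>j<n. A r j * crs_update A m n x b j)
      = (\<Sum>j<n. A r j * x j + (b - x k) * (A r j * u j))"
    unfolding crs_update_def by (intro sum.cong) (auto simp: algebra_simps)
  then have "(\<Sum>j<n. A r j * crs_update A m n x b j)
      = (\<Sum>j<n. A r j * x j) + (b - x k) * (\<Sum>j<n. A r j * u j)"
    by (simp add: sum.distrib sum_distrib_left)
  ultimately show ?thesis by simp
qed

lemma crs_update_sqnorm:
  "(\<Sum>i<n. (crs_update A m n x b i)^2) = (\<Sum>i<n. (x i)^2) + (b - x k)^2 / \<tau>"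
proof -
  have xu: "(\<Sum>i<n. x i * u i) = 0"
  proof -
    have "(\<Sum>i<n. x i * u i) = (\<Sum>i\<in>S. u i * x i)"
      using crs_direction_outside by (subst sum_lessThan_eq_sum_crs_S) (auto simp: mult.commute)
    then show ?thesis using crs_direction_spec(1) by (simp add: crs_H_def)
  qed
  have uu: "(\<Sum>i<n. (u i)^2) = 1 / \<tau>"
    using crs_direction_outside crs_direction_spec(3)
    by (subst sum_lessThan_eq_sum_crs_S) (auto simp: sqnorm_on_def)
  have "(\<Sum>i<n. (crs_update A m n x b i)^2)
      = (\<Sum>i<n. (x i)^2 + 2 * (b - x k) * (x i * u i) + (b - x k)^2 * (u i)^2)"
    by (simp add: crs_update_def power2_eq_square algebra_simps)
  also have "\<dots> = (\<Sum>i<n. (x i)^2) + 2 * (b - x k) * (\<Sum>i<n. x i * u i) + (b - x k)^2 * (\<Sum>i<n. (u i)^2)"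
    by (simp add: sum.distrib sum_distrib_left)
  finally show ?thesis using xu uu by simp
qed

end

text \<open>The last conjunct keeps the procedure alive when \<open>m = 0\<close>, where \<open>n\<close> may be too small for
  the potential argument: then every \<open>u\<^sub>t\<close> is a unit vector.\<close>

definition crs_inv :: "(nat \<Rightarrow> nat \<Rightarrow> real) \<Rightarrow> nat \<Rightarrow> nat \<Rightarrow> nat \<Rightarrow> (nat \<Rightarrow> real) \<Rightarrow> bool" where
  "crs_inv A m n t x \<longleftrightarrow> (\<forall>i<n. \<bar>x i\<bar> \<le> 1) \<and> card {i. i < n \<and> \<bar>x i\<bar> = 1} = t
     \<and> (\<forall>r<m. (\<Sum>j<n. A r j * x j) = 0) \<and> (m = 0 \<longrightarrow> (\<forall>i<n. \<bar>x i\<bar> = 1 \<or> x i = 0))"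

lemma crs_inv_init: "crs_inv A m n 0 (\<lambda>_. 0)"
  by (simp add: crs_inv_def)

lemma crs_inv_unconstrained_vanish: "crs_inv A 0 n t x \<Longrightarrow> \<forall>j\<in>crs_S n x. x j = 0"
  by (force simp: crs_inv_def crs_S_iff)

lemma crs_inv_unconstrained_sqnorm:
  assumes "crs_inv A 0 n t x"
  shows "(\<Sum>i<n. (x i)^2) = real t"
proof -
  have "(\<Sum>i<n. (x i)^2) = (\<Sum>i<n. if \<bar>x i\<bar> = 1 then 1 else 0)"
  proof (intro sum.cong refl)
    fix i assume "i \<in> {..<n}"
    then have "\<bar>x i\<bar> = 1 \<or> x i = 0" using assms by (simp add: crs_inv_def)
    moreover have "(x i)^2 = \<bar>x i\<bar>^2" by simp
    ultimately show "(x i)^2 = (if \<bar>x i\<bar> = 1 then 1 else 0)"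
      by (cases "\<bar>x i\<bar> = 1") simp_all
  qed
  also have "\<dots> = real (card {i. i < n \<and> \<bar>x i\<bar> = 1})"
    by (simp add: sum.If_cases Int_def conj_commute)
  finally show ?thesis using assms by (simp add: crs_inv_def)
qed

lemma crs_update_unconstrained:
  assumes "crs_inv A 0 n t x" "crs_cand A 0 n x \<noteq> {}" "i \<noteq> crs_pivot A 0 n x"
  shows "crs_update A 0 n x b i = x i"
proof (cases "i \<in> crs_S n x")
  case True
  have "crs_tau A 0 n x = 1"
    using leverage_perp_on[OF finite_crs_S crs_pivot_cand(1)[OF assms(2)] orthonormal_on_Nil]
      crs_H_unconstrained[OF refl crs_inv_unconstrained_vanish[OF assms(1)]]
    by (simp add: crs_tau_def span_leverage_def)
  then have "crs_direction A 0 n x i = 0"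
    using crs_direction_sq_le[OF assms(2) True assms(3)] by simp
  then show ?thesis by (simp add: crs_update_def)
qed (rule crs_update_outside[OF assms(2)])

lemma crs_inv_update:
  assumes inv: "crs_inv A m n t x" and cand: "crs_cand A m n x \<noteq> {}" and b: "b = -1 \<or> b = 1"
  shows "crs_inv A m n (Suc t) (crs_update A m n x b)"
proof -
  let ?k = "crs_pivot A m n x" and ?y = "crs_update A m n x b"
  have k: "?k < n" "\<bar>x ?k\<bar> \<le> 1/20" "?y ?k = b"
    using crs_pivot_cand[OF cand] crs_update_pivot[OF cand] by (auto simp: crs_S_iff)
  have other: "?y i = x i \<and> \<bar>x i\<bar> \<le> 1 \<or> \<bar>?y i\<bar> < 1 \<and> \<bar>x i\<bar> < 1" if "i < n" "i \<noteq> ?k" for i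
  proof (cases "i \<in> crs_S n x")
    case True
    then show ?thesis
      using crs_update_inside[OF cand _ True that(2)] b by (auto simp: crs_S_iff)
  next
    case False
    then show ?thesis
      using crs_update_outside[OF cand False] inv that(1) by (auto simp: crs_inv_def)
  qed
  have "i < n \<and> \<bar>?y i\<bar> = 1 \<longleftrightarrow> i = ?k \<or> i < n \<and> \<bar>x i\<bar> = 1" for i
  proof (cases "i < n \<and> i \<noteq> ?k")
    case True
    then show ?thesis using other[of i] by auto
  next
    case False
    then show ?thesis using k b by auto
  qed
  then have "{i. i < n \<and> \<bar>?y i\<bar> = 1} = insert ?k {i. i < n \<and> \<bar>x i\<bar> = 1}"
    by blast
  then have "card {i. i < n \<and> \<bar>?y i\<bar> = 1} = Suc t"
    using inv k(2) by (simp add: crs_inv_def)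
  moreover have "\<bar>?y i\<bar> \<le> 1" if "i < n" for i
    using k b other[OF that] by (cases "i = ?k") auto
  moreover have "(\<Sum>j<n. A r j * ?y j) = 0" if "r < m" for r
    using crs_update_constraint[OF cand that] inv that by (simp add: crs_inv_def)
  moreover have "\<bar>?y i\<bar> = 1 \<or> ?y i = 0" if "m = 0" "i < n" for i
    using crs_update_unconstrained[of A n t x i b] inv cand k(3) b that
    by (cases "i = ?k") (auto simp: crs_inv_def)
  ultimately show ?thesis by (simp add: crs_inv_def)
qed

section \<open>Existence of a pivot\<close>

lemma card_large_span_leverage:
  assumes "finite S" "orthonormal_on S ws" "0 < c"
  shows "c * card {i \<in> S. c < span_leverage ws i} \<le> length ws"
proof -
  have "c * card {i \<in> S. c < span_leverage ws i} = (\<Sum>i\<in>{i \<in> S. c < span_leverage ws i}. c)"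
    by simp
  also have "\<dots> \<le> (\<Sum>i\<in>{i \<in> S. c < span_leverage ws i}. span_leverage ws i)"
    by (intro sum_mono) auto
  also have "\<dots> \<le> (\<Sum>i\<in>S. span_leverage ws i)"
    using assms(1) span_leverage_nonneg by (intro sum_mono2) auto
  finally show ?thesis using sum_span_leverage[OF assms(2)] by simp
qed

lemma card_large_coords:
  fixes x :: "nat \<Rightarrow> real"
  assumes "0 \<le> \<delta>" "\<delta> < 1"
  shows "\<delta>^2 * card {i. i < n \<and> \<delta> < \<bar>x i\<bar>}
    \<le> (\<Sum>i<n. (x i)^2) - (1 - \<delta>^2) * card {i. i < n \<and> \<bar>x i\<bar> = 1}"
proof -
  define F where "F = {i. i < n \<and> \<bar>x i\<bar> = 1}"
  define G where "G = {i. i < n \<and> \<delta> < \<bar>x i\<bar> \<and> \<bar>x i\<bar> \<noteq> 1}"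
  have split: "{i. i < n \<and> \<delta> < \<bar>x i\<bar>} = F \<union> G" "F \<inter> G = {}" "finite F" "finite G"
    using assms(2) by (auto simp: F_def G_def)
  have "(x i)^2 = 1" if "i \<in> F" for i
    using that power2_abs[of "x i"] by (simp add: F_def)
  then have "(\<Sum>i\<in>F. (x i)^2) = card F" by simp
  moreover have "\<delta>^2 * card G \<le> (\<Sum>i\<in>G. (x i)^2)"
  proof -
    have "\<delta>^2 \<le> (x i)^2" if "i \<in> G" for i
      using power_mono[of \<delta> "\<bar>x i\<bar>" 2] assms(1) that by (simp add: G_def)
    then show ?thesis using sum_mono[of G "\<lambda>_. \<delta>^2" "\<lambda>i. (x i)^2"] by (simp add: mult.commute)
  qed
  moreover have "(\<Sum>i\<in>F \<union> G. (x i)^2) \<le> (\<Sum>i<n. (x i)^2)"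
    by (intro sum_mono2) (auto simp: F_def G_def)
  moreover have "(\<Sum>i\<in>F \<union> G. (x i)^2) = (\<Sum>i\<in>F. (x i)^2) + (\<Sum>i\<in>G. (x i)^2)"
    "card (F \<union> G) = card F + card G"
    using split(2-4) by (simp_all add: sum.union_disjoint card_Un_disjoint)
  ultimately show ?thesis
    unfolding split(1) F_def[symmetric] by (simp add: algebra_simps)
qed

text \<open>The hypothesis says that the coordinates with \<open>|x i| \<le> \<delta>\<close> outnumber those whose leverage
  in the span of the constraints exceeds \<open>\<gamma>\<close>.\<close>

lemma crs_cand_nonempty:
  assumes ws: "orthonormal_on (crs_S n x) ws" "crs_H A m n x = perp_on (crs_S n x) ws"
    and small: "10000 * real (length ws) + 400 * (\<Sum>i<n. (x i)^2)
      - 399 * real (card {i. i < n \<and> \<bar>x i\<bar> = 1}) < real n"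
  shows "crs_cand A m n x \<noteq> {}"
proof -
  define N where "N = {i. i < n \<and> \<bar>x i\<bar> \<le> 1/20}"
  define L where "L = {i \<in> crs_S n x. 1/10000 < span_leverage ws i}"
  have "card N + card {i. i < n \<and> 1/20 < \<bar>x i\<bar>} = card (N \<union> {i. i < n \<and> 1/20 < \<bar>x i\<bar>})"
    by (rule card_Un_disjoint[symmetric]) (auto simp: N_def)
  also have "N \<union> {i. i < n \<and> 1/20 < \<bar>x i\<bar>} = {..<n}"
    by (auto simp: N_def)
  finally have "card N + card {i. i < n \<and> 1/20 < \<bar>x i\<bar>} = n" by simp
  moreover have "(1/20)^2 * card {i. i < n \<and> 1/20 < \<bar>x i\<bar>}
      \<le> (\<Sum>i<n. (x i)^2) - (1 - (1/20)^2) * card {i. i < n \<and> \<bar>x i\<bar> = 1}"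
    by (rule card_large_coords) auto
  moreover have "1/10000 * card L \<le> length ws"
    unfolding L_def by (rule card_large_span_leverage[OF finite_crs_S ws(1)]) simp
  ultimately have "card L < card N"
    using small by (simp add: power2_eq_square)
  moreover have "finite L" using finite_crs_S by (simp add: L_def)
  ultimately obtain i where i: "i \<in> N" "i \<notin> L"
    using card_mono[of L N] by (meson not_le subsetI)
  then have "i \<in> crs_S n x" by (simp add: N_def crs_S_iff)
  then have "leverage (crs_S n x) (crs_H A m n x) i = 1 - span_leverage ws i"
    using leverage_perp_on[OF finite_crs_S _ ws(1)] ws(2) by simp
  then have "i \<in> crs_cand A m n x"
    using i \<open>i \<in> crs_S n x\<close> by (auto simp: crs_cand_def L_def N_def crs_gamma_def crs_delta_def)
  then show ?thesis by blast
qed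

section \<open>The potential\<close>

lemma exp_le_one_plus_self_plus_square:
  fixes y :: real
  assumes "\<bar>y\<bar> \<le> 1"
  shows "exp y \<le> 1 + y + y^2"
proof (cases "0 \<le> y")
  case True
  then show ?thesis using exp_bound assms by auto
next
  case False
  have "(1 + y + y^2) * (1 - y) = 1 - y^3"
    by (simp add: algebra_simps power2_eq_square power3_eq_cube)
  moreover have "y^3 < 0" using False by (simp add: power_less_zero_eq)
  ultimately have "1 \<le> (1 + y + y^2) * (1 - y)" by simp
  then have "1 / (1 - y) \<le> 1 + y + y^2"
    using False by (simp add: divide_simps)
  moreover have "(1 - y) * exp y \<le> 1"
    using exp_ge_add_one_self[of "-y"] mult_right_mono[of "1 - y" "exp (-y)" "exp y"]
    by (simp add: exp_minus_inverse mult.commute)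
  then have "exp y \<le> 1 / (1 - y)"
    using False by (simp add: le_divide_eq mult.commute)
  ultimately show ?thesis by linarith
qed

lemma shifted_square_deviation:
  fixes d e s :: real
  assumes "\<bar>d\<bar> \<le> 1/20" "0 \<le> e" "s = 1 \<or> s = -1"
  shows "\<bar>(1 + s * d)^2 * (1 + e) - 1\<bar> \<le> 41/20 * \<bar>d\<bar> + 6/5 * e"
proof -
  have "\<bar>1 + s * d\<bar> \<le> 21/20" "\<bar>2 + s * d\<bar> \<le> 41/20" using assms(1,3) by auto
  then have "(1 + s * d)^2 \<le> (21/20)^2"
    using power_mono[of "\<bar>1 + s * d\<bar>" "21/20" 2] by (simp add: power2_abs)
  then have "(1 + s * d)^2 \<le> 6/5" by (simp add: power2_eq_square)
  moreover have "\<bar>s * d * (2 + s * d)\<bar> = \<bar>d\<bar> * \<bar>2 + s * d\<bar>"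
    using assms(3) by (auto simp: abs_mult)
  moreover have "\<bar>d\<bar> * \<bar>2 + s * d\<bar> \<le> \<bar>d\<bar> * (41/20)"
    using \<open>\<bar>2 + s * d\<bar> \<le> 41/20\<close> by (intro mult_left_mono) auto
  moreover have "(1 + s * d)^2 * (1 + e) - 1 = s * d * (2 + s * d) + e * (1 + s * d)^2"
    using assms(3) by (auto simp: algebra_simps power2_eq_square)
  ultimately have "\<bar>(1 + s * d)^2 * (1 + e) - 1\<bar> \<le> \<bar>d\<bar> * (41/20) + e * (1 + s * d)^2"
    using abs_triangle_ineq[of "s * d * (2 + s * d)" "e * (1 + s * d)^2"] assms(2) by simp
  also have "\<dots> \<le> \<bar>d\<bar> * (41/20) + e * (6/5)"
    using mult_left_mono[OF \<open>(1 + s * d)^2 \<le> 6/5\<close> assms(2)] by simp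
  finally show ?thesis by simp
qed

lemma potential_drift_le:
  fixes d e :: real
  assumes "\<bar>d\<bar> \<le> 1/20" "0 \<le> e" "e \<le> 1/9999"
  shows "((1 - d^2) * (1 + e) - 1) / 10 + ((41/20 * \<bar>d\<bar> + 6/5 * e) / 10)^2 \<le> 11/1000000"
proof -
  define a where "a = \<bar>d\<bar>"
  have a: "0 \<le> a" "0 \<le> a * a" "a * e \<le> e / 20" "e * e \<le> e / 9999" "0 \<le> a * a * e"
    using assms mult_right_mono[of a "1/20" e] mult_left_mono[of e "1/9999" e] by (auto simp: a_def)
  have "((1 - d^2) * (1 + e) - 1) / 10 + ((41/20 * a + 6/5 * e) / 10)^2
    = e/10 - a*a/10 - a*a*e/10 + 1681/40000 * (a*a) + 123/2500 * (a*e) + 9/625 * (e*e)"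
    unfolding a_def power2_eq_square by (simp add: field_simps)
  also have "\<dots> \<le> 11/1000000" using a assms(3) by linarith
  finally show ?thesis by (simp add: a_def)
qed

text \<open>With probability \<open>(1 - d)/2\<close> the pivot is set to \<open>-1\<close>, which increases \<open>\<parallel>x\<parallel>\<^sup>2\<close> by
  \<open>(1 + d)\<^sup>2/\<tau>\<close>, and with probability \<open>(1 + d)/2\<close> it is set to \<open>1\<close>, increasing it by
  \<open>(1 - d)\<^sup>2/\<tau>\<close>.\<close>

lemma potential_factor_le_1:
  fixes d \<tau> :: real
  assumes "\<bar>d\<bar> \<le> 1/20" "1 - 1/10000 \<le> \<tau>" "\<tau> \<le> 1"
  shows "(1 - d) / 2 * exp ((1/10) * ((1 + d)^2 / \<tau> - 1 - 11/100000))
       + (1 + d) / 2 * exp ((1/10) * ((1 - d)^2 / \<tau> - 1 - 11/100000)) \<le> 1"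
proof -
  define e where "e = 1 / \<tau> - 1"
  have e: "0 \<le> e" "e \<le> 1/9999" using assms by (auto simp: e_def divide_simps)
  define y where "y s = ((1 + s * d)^2 * (1 + e) - 1) / 10" for s
  define Q where "Q = 41/20 * \<bar>d\<bar> + 6/5 * e"
  have yQ: "\<bar>y s\<bar> \<le> Q / 10" if "s = 1 \<or> s = -1" for s
    using shifted_square_deviation[OF assms(1) e(1) that] by (simp add: y_def Q_def)
  have Q: "Q \<le> 1" using assms(1) e by (simp add: Q_def)
  have exp_y: "exp (y s) \<le> 1 + y s + (Q / 10)^2" if "s = 1 \<or> s = -1" for s
  proof -
    have "\<bar>y s\<bar> \<le> 1" using yQ[OF that] Q by simp
    moreover have "(y s)^2 \<le> (Q / 10)^2"
      using yQ[OF that] power_mono[of "\<bar>y s\<bar>" "Q / 10" 2] by (simp add: power2_abs)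
    ultimately show ?thesis using exp_le_one_plus_self_plus_square[of "y s"] by linarith
  qed
  have mean: "(1 - d) / 2 * y 1 + (1 + d) / 2 * y (-1) = ((1 - d^2) * (1 + e) - 1) / 10"
    by (simp add: y_def power2_eq_square field_simps)
  have w: "0 \<le> (1 - d) / 2" "0 \<le> (1 + d) / 2" using assms(1) by auto
  have "(1 - d) / 2 * exp (y 1) + (1 + d) / 2 * exp (y (-1))
      \<le> (1 - d) / 2 * (1 + y 1 + (Q / 10)^2) + (1 + d) / 2 * (1 + y (-1) + (Q / 10)^2)"
    using exp_y w by (intro add_mono mult_left_mono) auto
  also have "\<dots> = 1 + ((1 - d^2) * (1 + e) - 1) / 10 + (Q / 10)^2"
    using mean by (simp add: field_simps)
  also have "\<dots> \<le> 1 + 11/1000000"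
    using potential_drift_le[OF assms(1) e] by (simp add: Q_def)
  also have "\<dots> \<le> exp (11/1000000)" by (rule exp_ge_add_one_self)
  finally have bound: "(1 - d) / 2 * exp (y 1) + (1 + d) / 2 * exp (y (-1)) \<le> exp (11/1000000)" .
  have shift: "exp ((1/10) * ((1 + s * d)^2 / \<tau> - 1 - 11/100000)) = exp (y s) / exp (11/1000000)" for s
  proof -
    have "(1/10) * ((1 + s * d)^2 / \<tau> - 1 - 11/100000) = y s - 11/1000000"
      using assms by (simp add: y_def e_def field_simps)
    then show ?thesis by (simp only: exp_diff)
  qed
  show ?thesis
    using shift[of 1] shift[of "-1"] bound by (simp add: divide_le_eq add_divide_distrib[symmetric])
qed

text \<open>The factor \<open>1 + 11/100000\<close> absorbs \<open>1/\<tau> \<le> 1 + 1/9999\<close>, and the offset \<open>n/10000\<close>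
  makes the initial value at most \<open>1/100\<close>.  For \<open>m = 0\<close> the procedure never fails, so the
  potential may vanish on all live states.\<close>

definition crs_potential :: "nat \<Rightarrow> nat \<Rightarrow> nat \<Rightarrow> (nat \<Rightarrow> real) option \<Rightarrow> real" where
  "crs_potential m n t xo = (case xo of None \<Rightarrow> 1 | Some x \<Rightarrow>
     if m = 0 then 0 else exp ((1/10) * ((\<Sum>i<n. (x i)^2) - t - 11/100000 * t - n / 10000)))"

lemma crs_potential_nonneg: "0 \<le> crs_potential m n t xo"
  by (simp add: crs_potential_def split: option.split)

lemma crs_T_le: "real (crs_T n) \<le> 9/10 * real n"
  unfolding crs_T_def by (simp add: of_nat_nat) linarith

lemma crs_potential_ge_1_if_no_cand:
  assumes inv: "crs_inv A m n t x" and t: "t < crs_T n" and mn: "10^7 * real m \<le> real n"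
    and no_cand: "crs_cand A m n x = {}"
  shows "1 \<le> crs_potential m n t (Some x)"
proof (cases "m = 0")
  case True
  have "crs_cand A m n x \<noteq> {}"
  proof (rule crs_cand_nonempty[OF orthonormal_on_Nil])
    show "crs_H A m n x = perp_on (crs_S n x) []"
      using True crs_inv_unconstrained_vanish inv by (intro crs_H_unconstrained) auto
    show "10000 * real (length []) + 400 * (\<Sum>i<n. (x i)^2)
      - 399 * real (card {i. i < n \<and> \<bar>x i\<bar> = 1}) < real n"
      using True inv crs_inv_unconstrained_sqnorm[of A n t x] t crs_T_le[of n]
      by (simp add: crs_inv_def)
  qed
  with no_cand show ?thesis by simp
next
  case False
  obtain ws where ws: "orthonormal_on (crs_S n x) ws" "crs_H A m n x = perp_on (crs_S n x) ws"
    "length ws \<le> Suc m"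
    using crs_H_basis by blast
  show ?thesis
  proof (rule ccontr)
    assume "\<not> 1 \<le> crs_potential m n t (Some x)"
    then have "(\<Sum>i<n. (x i)^2) - t < 11/100000 * t + n / 10000"
      using False by (simp add: crs_potential_def)
    moreover have "real (length ws) \<le> 2 * real m" "real t + 1 \<le> 9/10 * real n"
      using ws(3) False t crs_T_le[of n] by linarith+
    ultimately have "10000 * real (length ws) + 400 * (\<Sum>i<n. (x i)^2) - 399 * real t < real n"
      using mn by simp
    then have "crs_cand A m n x \<noteq> {}"
      using crs_cand_nonempty[OF ws(1,2)] inv by (simp add: crs_inv_def)
    with no_cand show False by simp
  qed
qed

lemma crs_bitprob_cand:
  "crs_cand A m n x \<noteq> {} \<Longrightarrow> crs_bitprob A m n (Some x) b = (1 + b * x (crs_pivot A m n x)) / 2"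
  by (simp add: crs_bitprob_def crs_pivot_def)

lemma crs_potential_supermartingale:
  assumes inv: "crs_inv A m n t x" and t: "t < crs_T n" and mn: "10^7 * real m \<le> real n"
  shows "(\<Sum>b\<in>{-1, 1}. crs_bitprob A m n (Some x) b * crs_potential m n (Suc t) (crs_step A m n x b))
    \<le> crs_potential m n t (Some x)"
proof (cases "crs_cand A m n x = {}")
  case True
  then show ?thesis
    using crs_potential_ge_1_if_no_cand[OF inv t mn True]
    by (simp add: crs_bitprob_def crs_step_def crs_potential_def)
next
  case cand: False
  show ?thesis
  proof (cases "m = 0")
    case True
    then show ?thesis unfolding crs_step_eq_update[OF cand] by (simp add: crs_potential_def)
  next
    case False
    define d where "d = x (crs_pivot A m n x)"
    define \<tau> where "\<tau> = crs_tau A m n x"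
    define P where "P = crs_potential m n t (Some x)"
    have step: "crs_potential m n (Suc t) (crs_step A m n x b)
        = P * exp ((1/10) * ((b - d)^2 / \<tau> - 1 - 11/100000))" for b
      using False unfolding crs_step_eq_update[OF cand] P_def
      by (simp add: crs_potential_def crs_update_sqnorm[OF cand] d_def \<tau>_def
          algebra_simps flip: exp_add)
    have "(-1 - d)^2 = (1 + d)^2" by (simp add: power2_eq_square algebra_simps)
    then have "(\<Sum>b\<in>{-1, 1}. crs_bitprob A m n (Some x) b * crs_potential m n (Suc t) (crs_step A m n x b))
      = P * ((1 - d) / 2 * exp ((1/10) * ((1 + d)^2 / \<tau> - 1 - 11/100000))
           + (1 + d) / 2 * exp ((1/10) * ((1 - d)^2 / \<tau> - 1 - 11/100000)))"
      using step by (simp add: crs_bitprob_cand[OF cand] d_def algebra_simps)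
    also have "\<dots> \<le> P * 1"
      using potential_factor_le_1 crs_pivot_cand[OF cand] crs_direction_spec(4)[OF cand]
        crs_potential_nonneg
      by (intro mult_left_mono) (simp_all add: d_def \<tau>_def P_def)
    finally show ?thesis by (simp add: P_def)
  qed
qed

section \<open>Random runs\<close>

definition path_prob :: "('s \<Rightarrow> 'b \<Rightarrow> real) \<Rightarrow> ('s \<Rightarrow> 'b \<Rightarrow> 's) \<Rightarrow> 's \<Rightarrow> 'b list \<Rightarrow> real" where
  "path_prob p f s bs = (\<Prod>t<length bs. p (foldl f s (take t bs)) (bs ! t))"

lemma path_prob_Nil [simp]: "path_prob p f s [] = 1"
  by (simp add: path_prob_def)

lemma path_prob_Cons [simp]: "path_prob p f s (b # bs) = p s b * path_prob p f (f s b) bs"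
  unfolding path_prob_def length_Cons prod.lessThan_Suc_shift by simp

lemma path_prob_nonneg:
  assumes "\<And>s b. b \<in> B \<Longrightarrow> 0 \<le> p s b" "set bs \<subseteq> B"
  shows "0 \<le> path_prob p f s bs"
  unfolding path_prob_def using assms by (intro prod_nonneg) (auto dest: nth_mem)

lemma lists_length_0: "{bs. set bs \<subseteq> B \<and> length bs = 0} = {[]}"
  by auto

lemma sum_lists_length_Suc:
  assumes "finite B"
  shows "(\<Sum>bs\<in>{bs. set bs \<subseteq> B \<and> length bs = Suc l}. g bs)
    = (\<Sum>b\<in>B. \<Sum>bs\<in>{bs. set bs \<subseteq> B \<and> length bs = l}. g (b # bs))"
proof -
  have "(\<Sum>bs\<in>{bs. set bs \<subseteq> B \<and> length bs = Suc l}. g bs)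
      = (\<Sum>(bs, b)\<in>{bs. set bs \<subseteq> B \<and> length bs = l} \<times> B. g (b # bs))"
    unfolding lists_length_Suc_eq
    by (subst sum.reindex[OF inj_split_Cons]) (simp add: case_prod_beta)
  also have "\<dots> = (\<Sum>b\<in>B. \<Sum>bs\<in>{bs. set bs \<subseteq> B \<and> length bs = l}. g (b # bs))"
    using assms finite_lists_length_eq[OF assms]
    by (simp add: sum.cartesian_product[symmetric] sum.swap[of _ B])
  finally show ?thesis .
qed

lemma sum_path_prob:
  assumes "finite B" "\<And>s. (\<Sum>b\<in>B. p s b) = 1"
  shows "(\<Sum>bs\<in>{bs. set bs \<subseteq> B \<and> length bs = l}. path_prob p f s bs) = 1"
proof (induction l arbitrary: s)
  case 0
  then show ?case unfolding lists_length_0 by simp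
next
  case (Suc l)
  then show ?case
    by (simp add: sum_lists_length_Suc[OF assms(1)] assms(2) flip: sum_distrib_left)
qed

lemma foldl_invariant:
  assumes "\<And>t s b. P t s \<Longrightarrow> b \<in> B \<Longrightarrow> P (Suc t) (f s b)" "P t s" "set bs \<subseteq> B"
  shows "P (t + length bs) (foldl f s bs)"
  using assms(2,3)
proof (induction bs arbitrary: t s)
  case (Cons b bs)
  then show ?case using assms(1)[of t s b] Cons.IH[of "Suc t" "f s b"] by simp
qed simp

lemma supermartingale_expectation_le:
  assumes "finite B" "\<And>s b. b \<in> B \<Longrightarrow> 0 \<le> p s b"
    and inv: "\<And>t s b. P t s \<Longrightarrow> b \<in> B \<Longrightarrow> P (Suc t) (f s b)"
    and super: "\<And>t s. t < T \<Longrightarrow> P t s \<Longrightarrow> (\<Sum>b\<in>B. p s b * \<Phi> (Suc t) (f s b)) \<le> \<Phi> t s"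
  shows "P t s \<Longrightarrow> t + l \<le> T \<Longrightarrow>
    (\<Sum>bs\<in>{bs. set bs \<subseteq> B \<and> length bs = l}. path_prob p f s bs * \<Phi> (t + l) (foldl f s bs)) \<le> \<Phi> t s"
proof (induction l arbitrary: t s)
  case 0
  then show ?case unfolding lists_length_0 by simp
next
  case (Suc l)
  have "(\<Sum>bs\<in>{bs. set bs \<subseteq> B \<and> length bs = Suc l}. path_prob p f s bs * \<Phi> (t + Suc l) (foldl f s bs))
      = (\<Sum>b\<in>B. p s b * (\<Sum>bs\<in>{bs. set bs \<subseteq> B \<and> length bs = l}.
          path_prob p f (f s b) bs * \<Phi> (Suc t + l) (foldl f (f s b) bs)))"
    by (simp add: sum_lists_length_Suc[OF assms(1)] sum_distrib_left mult.assoc)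
  also have "\<dots> \<le> (\<Sum>b\<in>B. p s b * \<Phi> (Suc t) (f s b))"
    using Suc.IH[of "Suc t"] Suc.prems inv assms(2) by (intro sum_mono mult_left_mono) auto
  also have "\<dots> \<le> \<Phi> t s"
    using Suc.prems by (intro super) auto
  finally show ?case .
qed

definition crs_next :: "(nat \<Rightarrow> nat \<Rightarrow> real) \<Rightarrow> nat \<Rightarrow> nat \<Rightarrow> (nat \<Rightarrow> real) option \<Rightarrow> real
    \<Rightarrow> (nat \<Rightarrow> real) option" where
  "crs_next A m n xo b = (case xo of None \<Rightarrow> None | Some x \<Rightarrow> crs_step A m n x b)"

lemma crs_next_None [simp]: "crs_next A m n None b = None"
  by (simp add: crs_next_def)

lemma foldl_crs_next_None [simp]: "foldl (crs_next A m n) None rs = None"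
  by (induction rs) simp_all

lemma ColumnReductionSampling_foldl:
  "ColumnReductionSampling A m n rs = foldl (crs_next A m n) (Some (\<lambda>_. 0)) rs"
  by (simp add: ColumnReductionSampling_def crs_run_def crs_next_def[abs_def])

lemma crs_seed_prob_eq_path_prob:
  "crs_seed_prob A m n rs = path_prob (crs_bitprob A m n) (crs_next A m n) (Some (\<lambda>_. 0)) rs"
  by (simp add: crs_seed_prob_def path_prob_def crs_run_def crs_next_def[abs_def])

lemma crs_seeds_eq: "crs_seeds n = {rs. set rs \<subseteq> {-1, 1} \<and> length rs = crs_T n}"
  by (auto simp: crs_seeds_def)

lemma crs_bitprob_nonneg: "b \<in> {-1, 1} \<Longrightarrow> 0 \<le> crs_bitprob A m n xo b"
  using crs_pivot_cand(2)[of A m n]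
  by (fastforce simp: crs_bitprob_def crs_pivot_def split: option.split)

lemma crs_bitprob_sum: "(\<Sum>b\<in>{-1, 1}. crs_bitprob A m n xo b) = 1"
  by (simp add: crs_bitprob_def field_simps split: option.split)

lemma crs_next_inv:
  assumes "pred_option (crs_inv A m n t) xo" "b \<in> {-1, 1}"
  shows "pred_option (crs_inv A m n (Suc t)) (crs_next A m n xo b)"
proof (cases xo)
  case (Some x)
  show ?thesis
  proof (cases "crs_cand A m n x = {}")
    case False
    then show ?thesis
      using Some assms crs_inv_update[OF _ False, of t b]
      by (simp add: crs_next_def crs_step_eq_update[OF False])
  qed (simp add: Some crs_next_def crs_step_def)
qed (simp add: crs_next_def)

lemma crs_next_supermartingale:
  assumes "pred_option (crs_inv A m n t) xo" "t < crs_T n" "10^7 * real m \<le> real n"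
  shows "(\<Sum>b\<in>{-1, 1}. crs_bitprob A m n xo b * crs_potential m n (Suc t) (crs_next A m n xo b))
    \<le> crs_potential m n t xo"
proof (cases xo)
  case None
  then show ?thesis by (simp add: crs_bitprob_def crs_potential_def)
next
  case (Some x)
  then show ?thesis
    using crs_potential_supermartingale[of A m n t x] assms by (simp add: crs_next_def)
qed

lemma crs_next_keeps_fixed:
  assumes "crs_next A m n (Some x) b = Some y" "\<bar>x i\<bar> = 1"
  shows "y i = x i"
proof -
  have cand: "crs_cand A m n x \<noteq> {}"
    using assms(1) by (auto simp: crs_next_def crs_step_def)
  then have "y = crs_update A m n x b"
    using assms(1) by (simp add: crs_next_def crs_step_eq_update)
  moreover have "i \<notin> crs_S n x" using assms(2) by (simp add: crs_S_iff)
  ultimately show ?thesis by (simp add: crs_update_outside[OF cand])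
qed

lemma foldl_crs_next_keeps_fixed:
  assumes "foldl (crs_next A m n) (Some x) rs = Some y" "\<bar>x i\<bar> = 1"
  shows "y i = x i"
proof -
  have step: "pred_option (\<lambda>z. z i = x i) (crs_next A m n xo b)"
    if "pred_option (\<lambda>z. z i = x i) xo" for xo b
  proof (cases xo)
    case (Some z)
    then show ?thesis
      using that crs_next_keeps_fixed[of A m n z b _ i] assms(2)
      by (cases "crs_next A m n xo b") auto
  qed simp
  have "pred_option (\<lambda>z. z i = x i) (foldl (crs_next A m n) (Some x) rs)"
    using foldl_invariant[where P = "\<lambda>_. pred_option (\<lambda>z. z i = x i)" and B = UNIV
        and f = "crs_next A m n" and t = 0 and s = "Some x" and bs = rs] step by simp
  with assms(1) show ?thesis by simp
qed

lemma crs_next_pivot: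
  assumes "crs_next A m n (Some x) b = Some y"
  shows "crs_pivot A m n x < n" "y (crs_pivot A m n x) = b"
proof -
  have cand: "crs_cand A m n x \<noteq> {}"
    using assms by (auto simp: crs_next_def crs_step_def)
  then show "crs_pivot A m n x < n"
    using crs_pivot_cand(1) by (simp add: crs_S_iff)
  have "y = crs_update A m n x b"
    using assms by (simp add: crs_next_def crs_step_eq_update[OF cand])
  then show "y (crs_pivot A m n x) = b"
    using crs_update_pivot[OF cand] by simp
qed

lemma ColumnReductionSampling_outputs_differ:
  assumes rs: "rs \<in> crs_seeds n" "rs' \<in> crs_seeds n" "rs \<noteq> rs'"
    and x: "ColumnReductionSampling A m n rs = Some x" "ColumnReductionSampling A m n rs' = Some x'"
  shows "\<exists>i<n. x i \<noteq> x' i \<and> \<bar>x i\<bar> = 1 \<and> \<bar>x' i\<bar> = 1"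
proof -
  let ?run = "foldl (crs_next A m n)"
  have "length rs = length rs'"
    using rs by (simp add: crs_seeds_def)
  then have "rs \<parallel> rs'"
    using rs(3) by (auto intro!: parallelI simp: prefix_def)
  then obtain ps b c qs qs' where bc: "b \<noteq> c" and split: "rs = ps @ b # qs" "rs' = ps @ c # qs'"
    using parallel_decomp by blast
  have pm: "\<bar>b\<bar> = 1" "\<bar>c\<bar> = 1"
    using rs(1,2) split by (auto simp: crs_seeds_def)
  obtain y where y: "?run (Some (\<lambda>_. 0)) ps = Some y"
    using x(1) split(1)
    by (cases "?run (Some (\<lambda>_. 0)) ps") (auto simp: ColumnReductionSampling_foldl)
  obtain z where z: "crs_next A m n (Some y) b = Some z"
    using x(1) split(1) y
    by (cases "crs_next A m n (Some y) b") (auto simp: ColumnReductionSampling_foldl)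
  obtain z' where z': "crs_next A m n (Some y) c = Some z'"
    using x(2) split(2) y
    by (cases "crs_next A m n (Some y) c") (auto simp: ColumnReductionSampling_foldl)
  let ?k = "crs_pivot A m n y"
  have "x ?k = b"
    using foldl_crs_next_keeps_fixed[of A m n z qs x ?k] x(1) split(1) y z crs_next_pivot[OF z] pm
    by (simp add: ColumnReductionSampling_foldl)
  moreover have "x' ?k = c"
    using foldl_crs_next_keeps_fixed[of A m n z' qs' x' ?k] x(2) split(2) y z' crs_next_pivot[OF z'] pm
    by (simp add: ColumnReductionSampling_foldl)
  ultimately show ?thesis
    using crs_next_pivot(1)[OF z] bc pm by auto
qed

lemma crs_potential_init_le:
  assumes "10^7 * real m \<le> real n"
  shows "crs_potential m n 0 (Some (\<lambda>_. 0)) \<le> 1/100"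
proof (cases "m = 0")
  case False
  have "1 + 100 \<le> exp (100 :: real)" by (rule exp_ge_add_one_self)
  then have "exp (-100 :: real) \<le> 1/100" by (simp add: exp_minus field_simps)
  moreover have "crs_potential m n 0 (Some (\<lambda>_. 0)) \<le> exp (-100)"
    using False assms by (simp add: crs_potential_def)
  ultimately show ?thesis by linarith
qed (simp add: crs_potential_def)

lemma crs_seed_prob_nonneg: "rs \<in> crs_seeds n \<Longrightarrow> 0 \<le> crs_seed_prob A m n rs"
  unfolding crs_seed_prob_eq_path_prob
  by (intro path_prob_nonneg[where B = "{-1, 1}"] crs_bitprob_nonneg) (auto simp: crs_seeds_def)

lemma sum_crs_seed_prob: "(\<Sum>rs\<in>crs_seeds n. crs_seed_prob A m n rs) = 1"
  unfolding crs_seeds_eq crs_seed_prob_eq_path_prob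
  by (rule sum_path_prob) (simp_all add: crs_bitprob_sum)

lemma crs_expected_final_potential_le:
  assumes "10^7 * real m \<le> real n"
  shows "(\<Sum>rs\<in>crs_seeds n. crs_seed_prob A m n rs
      * crs_potential m n (crs_T n) (ColumnReductionSampling A m n rs)) \<le> 1/100"
proof -
  have "(\<Sum>rs\<in>crs_seeds n. crs_seed_prob A m n rs
      * crs_potential m n (0 + crs_T n) (ColumnReductionSampling A m n rs))
      \<le> crs_potential m n 0 (Some (\<lambda>_. 0))"
    unfolding crs_seeds_eq crs_seed_prob_eq_path_prob ColumnReductionSampling_foldl
  proof (rule supermartingale_expectation_le[where P = "\<lambda>t. pred_option (crs_inv A m n t)"
        and T = "crs_T n"])
    fix t xo assume "t < crs_T n" "pred_option (crs_inv A m n t) xo"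
    then show "(\<Sum>b\<in>{-1, 1}. crs_bitprob A m n xo b * crs_potential m n (Suc t) (crs_next A m n xo b))
      \<le> crs_potential m n t xo"
      using crs_next_supermartingale assms by blast
  next
    show "0 \<le> crs_bitprob A m n xo b" if "b \<in> {-1, 1}" for xo b
      using that by (rule crs_bitprob_nonneg)
    show "pred_option (crs_inv A m n (Suc t)) (crs_next A m n xo b)"
      if "pred_option (crs_inv A m n t) xo" "b \<in> {-1, 1}" for t xo b
      using that by (rule crs_next_inv)
    show "pred_option (crs_inv A m n 0) (Some (\<lambda>_. 0))" using crs_inv_init by simp
  qed simp_all
  with crs_potential_init_le[OF assms] show ?thesis by simp
qed

lemma crs_good_if_Some:
  assumes "rs \<in> crs_seeds n" "ColumnReductionSampling A m n rs = Some x"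
  shows "crs_good A m n rs"
proof -
  have "pred_option (crs_inv A m n (0 + length rs)) (ColumnReductionSampling A m n rs)"
    unfolding ColumnReductionSampling_foldl using assms(1) crs_inv_init
    by (intro foldl_invariant[where P = "\<lambda>t. pred_option (crs_inv A m n t)" and B = "{-1, 1}"]
        crs_next_inv) (auto simp: crs_seeds_def)
  then show ?thesis
    using assms by (simp add: crs_good_def crs_inv_def crs_seeds_def)
qed

lemma crs_success_prob_ge:
  assumes "10^7 * real m \<le> real n"
  shows "0.99 \<le> crs_success_prob A m n"
proof -
  let ?p = "crs_seed_prob A m n"
  let ?\<Phi> = "\<lambda>rs. crs_potential m n (crs_T n) (ColumnReductionSampling A m n rs)"
  have "?p rs * (1 - ?\<Phi> rs) \<le> (if crs_good A m n rs then ?p rs else 0)"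
    if rs: "rs \<in> crs_seeds n" for rs
  proof (cases "ColumnReductionSampling A m n rs")
    case None
    then show ?thesis using crs_seed_prob_nonneg[OF rs] by (simp add: crs_potential_def)
  next
    case (Some x)
    then show ?thesis
      using crs_good_if_Some[OF rs Some] crs_seed_prob_nonneg[OF rs] crs_potential_nonneg
      by (simp add: mult_left_le)
  qed
  then have "(\<Sum>rs\<in>crs_seeds n. ?p rs * (1 - ?\<Phi> rs)) \<le> crs_success_prob A m n"
    unfolding crs_success_prob_def by (rule sum_mono)
  moreover have "(\<Sum>rs\<in>crs_seeds n. ?p rs * (1 - ?\<Phi> rs)) \<ge> 99/100"
    using sum_crs_seed_prob[of A m n] crs_expected_final_potential_le[OF assms, of A]
    by (simp add: right_diff_distrib sum_subtractf)
  ultimately show ?thesis by simp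
qed

theorem lemma5p3:
  shows "\<exists>C::real. C \<ge> 10^6 \<and>
    (\<forall>(A :: nat \<Rightarrow> nat \<Rightarrow> real) (m::nat) (n::nat).
       (\<forall>i<m. \<forall>j<n. \<bar>A i j\<bar> \<le> 1) \<and> real n \<ge> C * real m \<longrightarrow>
         crs_success_prob A m n \<ge> 0.99 \<and>
         (\<forall>rs rs' x x'. rs \<in> crs_seeds n \<and> rs' \<in> crs_seeds n \<and> rs \<noteq> rs'
             \<and> ColumnReductionSampling A m n rs = Some x
             \<and> ColumnReductionSampling A m n rs' = Some x' \<longrightarrow>
            (\<exists>i<n. x i \<noteq> x' i \<and> \<bar>x i\<bar> = 1 \<and> \<bar>x' i\<bar> = 1)))"
proof -
  \<comment> \<open>The bound on the entries of \<open>A\<close> is not needed: only the number of constraints matters.\<close>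
  have "crs_success_prob A m n \<ge> 0.99 \<and>
         (\<forall>rs rs' x x'. rs \<in> crs_seeds n \<and> rs' \<in> crs_seeds n \<and> rs \<noteq> rs'
             \<and> ColumnReductionSampling A m n rs = Some x
             \<and> ColumnReductionSampling A m n rs' = Some x' \<longrightarrow>
            (\<exists>i<n. x i \<noteq> x' i \<and> \<bar>x i\<bar> = 1 \<and> \<bar>x' i\<bar> = 1))"
    if "10^7 * real m \<le> real n" for A :: "nat \<Rightarrow> nat \<Rightarrow> real" and m n
    using crs_success_prob_ge[OF that] ColumnReductionSampling_outputs_differ by auto
  then show ?thesis by (intro exI[of _ "10^7"]) auto
qed

end
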